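(* Let $(X,\|\cdot\|_X)$ be a normed linear space. The following are equivalent: (i) $\Delta_X^{(c)}(R)<\infty$ for some $R\in(0,\infty)$; (ii) there is $C\in[0,\infty)$ such that $\Delta_X^{(c)}(R)\leq CR$ for all $R\in[0,\infty)$; (iii) $\Delta_X^{(c)}(R)<\infty$ for all $R\in[0,\infty)$ (the coarse Stone property); (iv) $\Delta_X^{(u)}(r)>0$ for all $r>0$ (the uniform Stone property).
   Context: For a cover $\mathcal{U}$ of $X$: $\mathrm{diam}(\mathcal{U})=\sup_{U\in\mathcal{U}}\mathrm{diam}(U)$; $\mathcal{L}(\mathcal{U})=\sup\{d\in[0,\infty): \text{every } E\subseteq X \text{ with } \mathrm{diam}(E)<d \text{ is contained in some } U\in\mathcal{U}\}$; point-finite means each point lies in only finitely many members. $\Delta_X^{(u)}(r)=\sup\{\mathcal{L}(\mathcal{U}): \mathcal{U} \text{ point-finite cover of } X,\ \mathrm{diam}(\mathcal{U})\leq r\}$, $\Delta_X^{(c)}(R)=\inf\{\mathrm{diam}(\mathcal{U}): \mathcal{U} \text{ point-finite cover of } X,\ \mathcal{L}(\mathcal{U})\geq R\}$. *)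

theory Defs
  imports "HOL-Analysis.Analysis"
begin

definition ediam :: "'a::metric_space set \<Rightarrow> ereal" where
  "ediam E = (if E = {} then 0 else Sup {ereal (dist x y) | x y. x \<in> E \<and> y \<in> E})"

definition cover_diam :: "'a::metric_space set set \<Rightarrow> ereal" where
  "cover_diam \<U> = Sup (ediam ` \<U>)"

definition lebesgue_num :: "'a::metric_space set set \<Rightarrow> ereal" where
  "lebesgue_num \<U> = Sup {ereal d | d. d \<ge> 0 \<and>
      (\<forall>E. ediam E < ereal d \<longrightarrow> (\<exists>U\<in>\<U>. E \<subseteq> U))}"

definition point_finite_cover :: "'a set set \<Rightarrow> bool" where
  "point_finite_cover \<U> \<longleftrightarrow> \<Union>\<U> = UNIV \<and> (\<forall>x. finite {U \<in> \<U>. x \<in> U})"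

definition Delta_u :: "'a::metric_space itself \<Rightarrow> real \<Rightarrow> ereal" where
  "Delta_u _ r = Sup {lebesgue_num \<U> | \<U>::'a set set.
      point_finite_cover \<U> \<and> cover_diam \<U> \<le> ereal r}"

definition Delta_c :: "'a::metric_space itself \<Rightarrow> real \<Rightarrow> ereal" where
  "Delta_c _ R = Inf {cover_diam \<U> | \<U>::'a set set.
      point_finite_cover \<U> \<and> lebesgue_num \<U> \<ge> ereal R}"

end

theory Submission
  imports Defs
begin

text \<open>Dilating a point-finite cover by \<open>t > 0\<close> keeps it point-finite and multiplies both its
  diameter and its Lebesgue number by \<open>t\<close>. So one cover with finite diameter and positive
  Lebesgue number yields, after dilation, covers realising every prescribed Lebesgue number
  with diameter proportional to it, and every prescribed diameter with positive Lebesgue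
  number; all four conditions say that such a cover exists.\<close>

definition scale_cover :: "real \<Rightarrow> 'a::real_normed_vector set set \<Rightarrow> 'a set set" where
  "scale_cover t \<U> = image (scaleR t) ` \<U>"

lemma ediam_nonneg: "0 \<le> ediam E"
proof (cases "E = {}")
  case False
  then obtain x where "x \<in> E" by blast
  then have "ereal (dist x x) \<le> Sup {ereal (dist x y) | x y. x \<in> E \<and> y \<in> E}"
    by (intro Sup_upper) blast
  then show ?thesis using False by (simp add: ediam_def zero_ereal_def)
qed (simp add: ediam_def)

lemma ediam_scaleR_le:
  fixes E :: "'a::real_normed_vector set"
  shows "ediam (scaleR c ` E) \<le> ereal \<bar>c\<bar> * ediam E"
proof (cases "E = {}")
  case False
  have "z \<le> ereal \<bar>c\<bar> * ediam E"
    if "z \<in> {ereal (dist x y) | x y. x \<in> scaleR c ` E \<and> y \<in> scaleR c ` E}" for z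
  proof -
    from that obtain a b where ab: "a \<in> E" "b \<in> E" "z = ereal (dist (c *\<^sub>R a) (c *\<^sub>R b))"
      by blast
    have "ereal (dist a b) \<le> ediam E"
      using False ab unfolding ediam_def by (auto intro!: Sup_upper)
    then have "ereal \<bar>c\<bar> * ereal (dist a b) \<le> ereal \<bar>c\<bar> * ediam E"
      by (intro ereal_mult_left_mono) auto
    moreover have "dist (c *\<^sub>R a) (c *\<^sub>R b) = \<bar>c\<bar> * dist a b"
      by (simp add: dist_norm scaleR_diff_right[symmetric])
    ultimately show ?thesis using ab by simp
  qed
  then have "Sup {ereal (dist x y) | x y. x \<in> scaleR c ` E \<and> y \<in> scaleR c ` E}
      \<le> ereal \<bar>c\<bar> * ediam E"
    by (rule Sup_least)
  then show ?thesis using False by (simp add: ediam_def)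
qed (simp add: ediam_def)

lemma lebesgue_num_nonneg: "0 \<le> lebesgue_num \<U>"
  unfolding lebesgue_num_def using ediam_nonneg
  by (intro Sup_upper2[of 0]) (auto simp: not_less[symmetric] zero_ereal_def[symmetric])

lemma point_finite_cover_scale_cover:
  fixes \<U> :: "'a::real_normed_vector set set"
  assumes t: "t > 0" and \<U>: "point_finite_cover \<U>"
  shows "point_finite_cover (scale_cover t \<U>)"
  unfolding point_finite_cover_def
proof (intro conjI allI)
  have "x \<in> \<Union> (scale_cover t \<U>)" for x :: 'a
  proof -
    from \<U> obtain S where "S \<in> \<U>" "inverse t *\<^sub>R x \<in> S"
      unfolding point_finite_cover_def by blast
    moreover have "x = t *\<^sub>R (inverse t *\<^sub>R x)" using t by simp
    ultimately show ?thesis unfolding scale_cover_def by blast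
  qed
  then show "\<Union> (scale_cover t \<U>) = UNIV" by blast
next
  fix x :: 'a
  have "{V \<in> scale_cover t \<U>. x \<in> V} \<subseteq> image (scaleR t) ` {S \<in> \<U>. inverse t *\<^sub>R x \<in> S}"
    using t unfolding scale_cover_def by auto
  moreover have "finite {S \<in> \<U>. inverse t *\<^sub>R x \<in> S}"
    using \<U> unfolding point_finite_cover_def by blast
  ultimately show "finite {V \<in> scale_cover t \<U>. x \<in> V}"
    by (meson finite_imageI finite_subset)
qed

lemma cover_diam_scale_cover_le:
  fixes \<U> :: "'a::real_normed_vector set set"
  assumes t: "t > 0" and B: "cover_diam \<U> \<le> ereal B"
  shows "cover_diam (scale_cover t \<U>) \<le> ereal (t * B)"
  unfolding cover_diam_def scale_cover_def
proof (rule Sup_least)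
  fix z assume "z \<in> ediam ` image (scaleR t) ` \<U>"
  then obtain S where S: "S \<in> \<U>" "z = ediam (scaleR t ` S)" by blast
  have "ediam S \<le> ereal B"
    using B S unfolding cover_diam_def by (meson SUP_upper order_trans)
  then have "ereal t * ediam S \<le> ereal t * ereal B"
    using t by (intro ereal_mult_left_mono) auto
  moreover have "z \<le> ereal t * ediam S" using ediam_scaleR_le[of t S] S t by simp
  ultimately show "z \<le> ereal (t * B)" by simp
qed

lemma scale_cover_contains_small_sets:
  fixes \<U> :: "'a::real_normed_vector set set"
  assumes t: "t > 0" and d: "\<forall>E. ediam E < ereal d \<longrightarrow> (\<exists>U\<in>\<U>. E \<subseteq> U)"
    and E: "ediam E < ereal (t * d)"
  shows "\<exists>V\<in>scale_cover t \<U>. E \<subseteq> V"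
proof -
  have "ediam (scaleR (inverse t) ` E) \<le> ereal (inverse t) * ediam E"
    using ediam_scaleR_le[of "inverse t" E] t by simp
  also have "\<dots> < ereal (inverse t) * ereal (t * d)"
    using E t ediam_nonneg[of E] by (cases "ediam E") auto
  also have "\<dots> = ereal d" using t by simp
  finally obtain S where S: "S \<in> \<U>" "scaleR (inverse t) ` E \<subseteq> S" using d by blast
  have "E \<subseteq> scaleR t ` S"
  proof
    fix x assume "x \<in> E"
    then have "inverse t *\<^sub>R x \<in> S" using S by blast
    moreover have "x = t *\<^sub>R (inverse t *\<^sub>R x)" using t by simp
    ultimately show "x \<in> scaleR t ` S" by blast
  qed
  then show ?thesis using S unfolding scale_cover_def by blast
qed

lemma lebesgue_num_scale_cover_ge:
  fixes \<U> :: "'a::real_normed_vector set set"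
  assumes t: "t > 0"
  shows "ereal t * lebesgue_num \<U> \<le> lebesgue_num (scale_cover t \<U>)"
proof -
  let ?A = "{d. d \<ge> 0 \<and> (\<forall>E. ediam E < ereal d \<longrightarrow> (\<exists>U\<in>\<U>. E \<subseteq> U))}"
  have eq: "lebesgue_num \<U> = (SUP d\<in>?A. ereal d)"
    unfolding lebesgue_num_def by (rule arg_cong[where f=Sup]) blast
  have "(0::real) \<in> ?A"
    using ediam_nonneg by (auto simp: not_less[symmetric] zero_ereal_def[symmetric])
  then have "ereal t * lebesgue_num \<U> = (SUP d\<in>?A. ereal t * ereal d)"
    unfolding eq using t by (intro Sup_ereal_mult_left') auto
  also have "\<dots> \<le> lebesgue_num (scale_cover t \<U>)"
  proof (rule SUP_least)
    fix d assume "d \<in> ?A"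
    then have "t * d \<ge> 0"
      "\<forall>E. ediam E < ereal (t * d) \<longrightarrow> (\<exists>V\<in>scale_cover t \<U>. E \<subseteq> V)"
      using scale_cover_contains_small_sets[OF t] t by auto
    then show "ereal t * ereal d \<le> lebesgue_num (scale_cover t \<U>)"
      unfolding lebesgue_num_def by (auto intro!: Sup_upper)
  qed
  finally show ?thesis .
qed

lemma
  fixes \<U> :: "'a::real_normed_vector set set" and X :: "'a itself"
  assumes t: "t > 0" and \<U>: "point_finite_cover \<U>"
    and L: "ereal L \<le> lebesgue_num \<U>" and B: "cover_diam \<U> \<le> ereal B"
  shows Delta_c_le_scaled_cover: "Delta_c X (t * L) \<le> ereal (t * B)"
    and Delta_u_ge_scaled_cover: "ereal (t * L) \<le> Delta_u X (t * B)"
proof -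
  let ?V = "scale_cover t \<U>"
  have V: "point_finite_cover ?V" by (rule point_finite_cover_scale_cover[OF t \<U>])
  have "ereal t * ereal L \<le> ereal t * lebesgue_num \<U>"
    using L t by (intro ereal_mult_left_mono) auto
  also have "\<dots> \<le> lebesgue_num ?V" by (rule lebesgue_num_scale_cover_ge[OF t])
  finally have leb: "ereal (t * L) \<le> lebesgue_num ?V" by simp
  have diam: "cover_diam ?V \<le> ereal (t * B)" by (rule cover_diam_scale_cover_le[OF t B])
  have "Delta_c X (t * L) \<le> cover_diam ?V"
    unfolding Delta_c_def by (rule Inf_lower) (use V leb in blast)
  with diam show "Delta_c X (t * L) \<le> ereal (t * B)" by simp
  have "lebesgue_num ?V \<le> Delta_u X (t * B)"
    unfolding Delta_u_def by (rule Sup_upper) (use V diam in blast)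
  with leb show "ereal (t * L) \<le> Delta_u X (t * B)" by simp
qed

lemma Delta_c_zero_le: "Delta_c (X :: 'a::real_normed_vector itself) 0 \<le> 0"
proof -
  let ?S = "(\<lambda>x::'a. {x}) ` UNIV"
  have "{U \<in> ?S. x \<in> U} = {{x}}" for x by auto
  then have "point_finite_cover ?S" unfolding point_finite_cover_def by auto
  moreover have "ediam {x} = 0" for x :: 'a
    unfolding ediam_def by (simp add: zero_ereal_def)
  then have "cover_diam ?S \<le> ereal 0"
    unfolding cover_diam_def by (auto intro!: Sup_least)
  ultimately show ?thesis
    using Delta_c_le_scaled_cover[of 1 ?S 0 0 X] lebesgue_num_nonneg[of ?S]
    by (simp add: zero_ereal_def)
qed

lemma Delta_c_finite_witness:
  fixes X :: "'a::real_normed_vector itself"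
  assumes "Delta_c X R < \<infinity>"
  obtains \<U> :: "'a set set" and B where "point_finite_cover \<U>" "ereal R \<le> lebesgue_num \<U>"
    "B > 0" "cover_diam \<U> \<le> ereal B"
proof -
  from assms obtain \<U> :: "'a set set" where \<U>: "point_finite_cover \<U>"
    "ereal R \<le> lebesgue_num \<U>" "cover_diam \<U> < \<infinity>"
    unfolding Delta_c_def Inf_less_iff by blast
  define B where "B = max 0 (real_of_ereal (cover_diam \<U>)) + 1"
  have "cover_diam \<U> \<le> ereal B"
    using \<U>(3) unfolding B_def by (cases "cover_diam \<U>") auto
  moreover have "B > 0" unfolding B_def by simp
  ultimately show ?thesis using \<U> that by blast
qed

lemma Delta_u_pos_witness:
  fixes X :: "'a::real_normed_vector itself"
  assumes "Delta_u X r > 0"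
  obtains \<U> :: "'a set set" and e where "point_finite_cover \<U>" "cover_diam \<U> \<le> ereal r"
    "e > 0" "ereal e \<le> lebesgue_num \<U>"
proof -
  from assms obtain \<U> :: "'a set set" where \<U>: "point_finite_cover \<U>"
    "cover_diam \<U> \<le> ereal r" "lebesgue_num \<U> > 0"
    unfolding Delta_u_def less_Sup_iff by blast
  obtain e where "0 < ereal e" "ereal e < lebesgue_num \<U>" using ereal_dense2[OF \<U>(3)] by blast
  with \<U> that show ?thesis by (metis ereal_less(2) less_imp_le)
qed

lemma Delta_c_linear_if_finite:
  fixes X :: "'a::real_normed_vector itself"
  assumes R0: "R0 > 0" and fin: "Delta_c X R0 < \<infinity>"
  shows "\<exists>C\<ge>0. \<forall>R\<ge>0. Delta_c X R \<le> ereal (C * R)"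
proof -
  obtain \<U> :: "'a set set" and B where \<U>: "point_finite_cover \<U>" "ereal R0 \<le> lebesgue_num \<U>"
    and B: "B > 0" "cover_diam \<U> \<le> ereal B"
    using Delta_c_finite_witness[OF fin] by blast
  have "Delta_c X R \<le> ereal (B / R0 * R)" if R: "R > 0" for R
    using Delta_c_le_scaled_cover[OF _ \<U> B(2), of "R / R0" X] R R0 by (simp add: mult.commute)
  with Delta_c_zero_le[of X] B R0 show ?thesis
    by (intro exI[of _ "B / R0"]) (auto simp: le_less zero_ereal_def)
qed

lemma Delta_u_pos_if_Delta_c_finite:
  fixes X :: "'a::real_normed_vector itself"
  assumes R0: "R0 > 0" and fin: "Delta_c X R0 < \<infinity>" and r: "r > 0"
  shows "Delta_u X r > 0"
proof -
  obtain \<U> :: "'a set set" and B where \<U>: "point_finite_cover \<U>" "ereal R0 \<le> lebesgue_num \<U>"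
    and B: "B > 0" "cover_diam \<U> \<le> ereal B"
    using Delta_c_finite_witness[OF fin] by blast
  have "ereal (r / B * R0) \<le> Delta_u X (r / B * B)"
    using Delta_u_ge_scaled_cover[OF _ \<U> B(2), of "r / B" X] r B by simp
  moreover have "0 < ereal (r / B * R0)" using r B R0 by simp
  moreover have "r / B * B = r" using B by simp
  ultimately show ?thesis by (metis less_le_trans)
qed

lemma Delta_c_finite_if_Delta_u_pos:
  fixes X :: "'a::real_normed_vector itself"
  assumes pos: "Delta_u X r0 > 0" and R: "R \<ge> 0"
  shows "Delta_c X R < \<infinity>"
proof -
  obtain \<U> :: "'a set set" and e where \<U>: "point_finite_cover \<U>" "cover_diam \<U> \<le> ereal r0"
    and e: "e > 0" "ereal e \<le> lebesgue_num \<U>"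
    using Delta_u_pos_witness[OF pos] by blast
  have "Delta_c X (R / e * e) \<le> ereal (R / e * r0)" if "R > 0"
    using Delta_c_le_scaled_cover[OF _ \<U>(1) e(2) \<U>(2), of "R / e" X] that e by simp
  then show ?thesis
    using Delta_c_zero_le[of X] R e by (cases "R = 0") (auto intro: le_less_trans)
qed

theorem lemma3p7:
  fixes X :: "'a::real_normed_vector itself"
  shows "((\<exists>R>0. Delta_c X R < \<infinity>)
           \<longleftrightarrow> (\<exists>C\<ge>0. \<forall>R\<ge>0. Delta_c X R \<le> ereal (C * R)))
       \<and> ((\<exists>C\<ge>0. \<forall>R\<ge>0. Delta_c X R \<le> ereal (C * R))
           \<longleftrightarrow> (\<forall>R\<ge>0. Delta_c X R < \<infinity>))
       \<and> ((\<forall>R\<ge>0. Delta_c X R < \<infinity>)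
           \<longleftrightarrow> (\<forall>r>0. Delta_u X r > 0))"
proof -
  let ?i = "\<exists>R>0. Delta_c X R < \<infinity>"
  let ?ii = "\<exists>C\<ge>0. \<forall>R\<ge>0. Delta_c X R \<le> ereal (C * R)"
  let ?iii = "\<forall>R\<ge>0. Delta_c X R < \<infinity>"
  let ?iv = "\<forall>r>0. Delta_u X r > 0"
  have "?i \<Longrightarrow> ?ii" using Delta_c_linear_if_finite by blast
  moreover have "?iii" if ii: "?ii"
  proof (intro allI impI)
    fix R :: real assume "R \<ge> 0"
    then obtain C where "Delta_c X R \<le> ereal (C * R)" using ii by blast
    then show "Delta_c X R < \<infinity>" using le_less_trans by fastforce
  qed
  moreover have "?iii \<Longrightarrow> ?i" by (intro exI[of _ 1]) simp
  moreover have "?i \<Longrightarrow> ?iv" using Delta_u_pos_if_Delta_c_finite by blast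
  moreover have "?iv \<Longrightarrow> ?iii" using Delta_c_finite_if_Delta_u_pos zero_less_one by blast
  ultimately show ?thesis by blast
qed

end
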